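(* Let $X$ be a set and $\lambda\in\mathbf{k}$, and let $j_X:X\to\mathrm{DD}(\Delta X)$ send $x$ to the tree $|\vee_{x^{(0)}}|$. Then $(\mathrm{DD}(\Delta X),\prec,\succ,d_X)$ together with $j_X$ is the free differential dendriform algebra of weight $\lambda$ on $X$: it is a differential dendriform algebra of weight $\lambda$, and for every differential dendriform algebra $(D,\prec_D,\succ_D,d_D)$ of weight $\lambda$ and every map of sets $f:X\to D$, there is a unique linear map $\bar f:\mathrm{DD}(\Delta X)\to D$ preserving $\prec$ and $\succ$, satisfying $d_D\bar f=\bar f d_X$ and $\bar f j_X=f$.
   Context: $\mathbf{k}$ is a commutative unital ring. Let $\Delta X:=X\times\mathbb N=\{x^{(n)}\mid x\in X,n\ge0\}$. Consider planar binary trees whose internal vertices are decorated by elements of $\Delta X$; $|$ denotes the tree with one leaf and no internal vertex. Every such tree $\tau\ne|$ is uniquely $\tau=\tau^l\vee_{y}\tau^r$, obtained by joining the roots of the trees $\tau^l,\tau^r$ to a new root vertex decorated by $y\in\Delta X$. Let $\mathrm{DD}(\Delta X)$ be the free $\mathbf{k}$-module on all such trees other than $|$. Define bilinear $\prec,\succ$ recursively on total depth: for $\tau\ne|$, $|\succ\tau:=\tau\prec|:=\tau$ and $|\prec\tau:=\tau\succ|:=0$; for $\tau=\tau^l\vee_{x}\tau^r$ and $\sigma=\sigma^l\vee_{y}\sigma^r$: $\tau\prec\sigma:=\tau^l\vee_x(\tau^r\prec\sigma+\tau^r\succ\sigma)$ and $\tau\succ\sigma:=(\tau\prec\sigma^l+\tau\succ\sigma^l)\vee_y\sigma^r$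 (grafting extended bilinearly). Define $d_X$ linearly by: if the internal vertices of $\tau$ are decorated by $x_1^{(r_1)},\dots,x_N^{(r_N)}$, then $d_X(\tau)=\sum_{\emptyset\ne S\subseteq\{1,\dots,N\}}\lambda^{|S|-1}\tau_S$, where $\tau_S$ is the tree of the same shape with each decoration $x_i^{(r_i)}$, $i\in S$, replaced by $x_i^{(r_i+1)}$. A dendriform algebra is a $\mathbf{k}$-module $D$ with bilinear operations $\prec,\succ$ such that for all $a,b,c\in D$: $(a\prec b)\prec c=a\prec(b\prec c+b\succ c)$, $(a\succ b)\prec c=a\succ(b\prec c)$, $(a\prec b+a\succ b)\succ c=a\succ(b\succ c)$. A derivation of weight $\lambda$ on it is a linear map $d$ with $d(a\prec b)=d(a)\prec b+a\prec d(b)+\lambda d(a)\prec d(b)$ and $d(a\succ b)=d(a)\succ b+a\succ d(b)+\lambda d(a)\succ d(b)$ for all $a,b$; then $(D,\prec,\succ,d)$ is a differential dendriform algebra of weight $\lambda$. *)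

theory Defs
  imports Main HOL.Modules "HOL-Library.Poly_Mapping"
begin

text \<open>A tree different from the one-leaf tree |.  A child equal to None is the
  leaf |; so every such tree is uniquely  l \/_y r.\<close>
datatype 'a dtree = Vert "'a dtree option" 'a "'a dtree option"

text \<open>Decorations in Delta X = X x N: the pair (x,n) stands for x^(n).\<close>
type_synonym 'x dd_basis = "('x \<times> nat) dtree"

text \<open>DD(Delta X): the free k-module on all trees other than |, as finitely
  supported functions.\<close>
type_synonym ('x, 'k) DD = "'x dd_basis \<Rightarrow>\<^sub>0 'k"

definition pm_scale :: "'k::comm_ring_1 \<Rightarrow> ('b \<Rightarrow>\<^sub>0 'k) \<Rightarrow> ('b \<Rightarrow>\<^sub>0 'k)" where
  "pm_scale c p = Poly_Mapping.map (\<lambda>a. c * a) p"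

definition lin_ext :: "('a \<Rightarrow> ('b \<Rightarrow>\<^sub>0 'k::comm_ring_1)) \<Rightarrow> ('a \<Rightarrow>\<^sub>0 'k) \<Rightarrow> ('b \<Rightarrow>\<^sub>0 'k)" where
  "lin_ext f p = (\<Sum>t\<in>Poly_Mapping.keys p. pm_scale (Poly_Mapping.lookup p t) (f t))"

definition graftR :: "'a dtree option \<Rightarrow> 'a \<Rightarrow> ('a dtree \<Rightarrow>\<^sub>0 'k::comm_ring_1) \<Rightarrow> ('a dtree \<Rightarrow>\<^sub>0 'k)" where
  "graftR l x p = lin_ext (\<lambda>t. Poly_Mapping.single (Vert l x (Some t)) 1) p"

definition graftL :: "('a dtree \<Rightarrow>\<^sub>0 'k::comm_ring_1) \<Rightarrow> 'a \<Rightarrow> 'a dtree option \<Rightarrow> ('a dtree \<Rightarrow>\<^sub>0 'k)" where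
  "graftL p y r = lin_ext (\<lambda>t. Poly_Mapping.single (Vert (Some t) y r) 1) p"

text \<open>The operations on basis trees (both different from |), using
  |>-tau = tau, tau<-| = tau, |<-tau = 0, tau>-| = 0.\<close>
fun dprec :: "'a dtree \<Rightarrow> 'a dtree \<Rightarrow> ('a dtree \<Rightarrow>\<^sub>0 'k::comm_ring_1)"
and dsucc :: "'a dtree \<Rightarrow> 'a dtree \<Rightarrow> ('a dtree \<Rightarrow>\<^sub>0 'k::comm_ring_1)" where
  "dprec (Vert l x r) s = graftR l x
     (case r of None \<Rightarrow> Poly_Mapping.single s 1 | Some r' \<Rightarrow> dprec r' s + dsucc r' s)"
| "dsucc t (Vert l y r) = graftL
     (case l of None \<Rightarrow> Poly_Mapping.single t 1 | Some l' \<Rightarrow> dprec t l' + dsucc t l') y r"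

definition DD_prec :: "('x, 'k::comm_ring_1) DD \<Rightarrow> ('x, 'k) DD \<Rightarrow> ('x, 'k) DD" where
  "DD_prec p q = lin_ext (\<lambda>t. lin_ext (\<lambda>s. dprec t s) q) p"

definition DD_succ :: "('x, 'k::comm_ring_1) DD \<Rightarrow> ('x, 'k) DD \<Rightarrow> ('x, 'k) DD" where
  "DD_succ p q = lin_ext (\<lambda>t. lin_ext (\<lambda>s. dsucc t s) q) p"

text \<open>All trees tau_S for subsets S of the internal vertices (including S empty),
  each paired with |S|; distinct S give distinct list entries.\<close>
fun subsets_bump :: "('x \<times> nat) dtree option \<Rightarrow> (('x \<times> nat) dtree option \<times> nat) list" where
  "subsets_bump None = [(None, 0)]"
| "subsets_bump (Some (Vert l (x, n) r)) =
     [(Some (Vert l' (x, n + b) r'), kl + b + kr).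
        (l', kl) \<leftarrow> subsets_bump l, b \<leftarrow> [0, 1], (r', kr) \<leftarrow> subsets_bump r]"

definition dX_basis :: "'k::comm_ring_1 \<Rightarrow> 'x dd_basis \<Rightarrow> ('x, 'k) DD" where
  "dX_basis lam t = (\<Sum>(t', k) \<leftarrow> subsets_bump (Some t).
      if k = 0 then 0 else Poly_Mapping.single (the t') (lam ^ (k - 1)))"

definition dX :: "'k::comm_ring_1 \<Rightarrow> ('x, 'k) DD \<Rightarrow> ('x, 'k) DD" where
  "dX lam p = lin_ext (dX_basis lam) p"

definition jX :: "'x \<Rightarrow> ('x, 'k::comm_ring_1) DD" where
  "jX x = Poly_Mapping.single (Vert None (x, 0) None) 1"

definition bilinear_op :: "('k::comm_ring_1 \<Rightarrow> 'd::ab_group_add \<Rightarrow> 'd) \<Rightarrow> ('d \<Rightarrow> 'd \<Rightarrow> 'd) \<Rightarrow> bool" where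
  "bilinear_op s m \<longleftrightarrow> (\<forall>a. module_hom s s (m a)) \<and> (\<forall>b. module_hom s s (\<lambda>a. m a b))"

definition dendriform_algebra ::
  "('k::comm_ring_1 \<Rightarrow> 'd::ab_group_add \<Rightarrow> 'd) \<Rightarrow> ('d \<Rightarrow> 'd \<Rightarrow> 'd) \<Rightarrow> ('d \<Rightarrow> 'd \<Rightarrow> 'd) \<Rightarrow> bool" where
  "dendriform_algebra s prec succ \<longleftrightarrow> module s \<and> bilinear_op s prec \<and> bilinear_op s succ \<and>
     (\<forall>a b c. prec (prec a b) c = prec a (prec b c + succ b c)) \<and>
     (\<forall>a b c. prec (succ a b) c = succ a (prec b c)) \<and>
     (\<forall>a b c. succ (prec a b + succ a b) c = succ a (succ b c))"

definition derivation_wt ::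
  "('k::comm_ring_1 \<Rightarrow> 'd::ab_group_add \<Rightarrow> 'd) \<Rightarrow> ('d \<Rightarrow> 'd \<Rightarrow> 'd) \<Rightarrow> ('d \<Rightarrow> 'd \<Rightarrow> 'd) \<Rightarrow> ('d \<Rightarrow> 'd) \<Rightarrow> 'k \<Rightarrow> bool" where
  "derivation_wt s prec succ d lam \<longleftrightarrow> module_hom s s d \<and>
     (\<forall>a b. d (prec a b) = prec (d a) b + prec a (d b) + s lam (prec (d a) (d b))) \<and>
     (\<forall>a b. d (succ a b) = succ (d a) b + succ a (d b) + s lam (succ (d a) (d b)))"

definition diff_dendriform_algebra ::
  "('k::comm_ring_1 \<Rightarrow> 'd::ab_group_add \<Rightarrow> 'd) \<Rightarrow> ('d \<Rightarrow> 'd \<Rightarrow> 'd) \<Rightarrow> ('d \<Rightarrow> 'd \<Rightarrow> 'd) \<Rightarrow> ('d \<Rightarrow> 'd) \<Rightarrow> 'k \<Rightarrow> bool" where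
  "diff_dendriform_algebra s prec succ d lam \<longleftrightarrow>
     dendriform_algebra s prec succ \<and> derivation_wt s prec succ d lam"

end

theory Submission
  imports Defs
begin

text \<open>Extend DD(\<Delta>X) by the one-leaf tree |, as the free module on trees-or-leaf (with | encoded
  as None), and put on it the product \<open>\<star>\<close> that is \<open>\<prec> + \<succ>\<close> on trees and has | as a two-sided unit.
  Both operations of DD(\<Delta>X) are then grafting along \<open>\<star>\<close>:
  \<open>(l \<or>\<^sub>x r) \<prec> s = l \<or>\<^sub>x (r \<star> s)\<close> and \<open>t \<succ> (l \<or>\<^sub>y r) = (t \<star> l) \<or>\<^sub>y r\<close>.
  With these identities, each dendriform axiom and each Leibniz rule on basis trees reduces to the
  same statement for smaller trees, so both follow by induction on the size of the outer trees;
  for the derivation one also uses that \<open>d\<^sub>X\<close> acts on a graft by a weight-\<lambda> Leibniz rule in which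
  the root decoration is either bumped or not.
  For freeness, every tree \<open>l \<or>\<^sub>x\<^sub>(\<^sub>n\<^sub>) r\<close> equals \<open>(l \<succ> d\<^sub>X\<^sup>n (j\<^sub>X x)) \<prec> r\<close>, so a morphism is
  determined by f; conversely, evaluating trees by this formula in the target is a morphism, by the
  same induction using the target's axioms.\<close>

abbreviation lookup where "lookup \<equiv> Poly_Mapping.lookup"
abbreviation keys where "keys \<equiv> Poly_Mapping.keys"
abbreviation single where "single \<equiv> Poly_Mapping.single"

section \<open>Linear maps out of free modules\<close>

lemma lookup_pm_scale [simp]: "lookup (pm_scale c p) t = c * lookup p t"
  by (simp add: pm_scale_def Poly_Mapping.map.rep_eq when_def)

lemma module_pm_scale: "module (pm_scale :: 'k::comm_ring_1 \<Rightarrow> ('b \<Rightarrow>\<^sub>0 'k) \<Rightarrow> _)"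
  by unfold_locales (rule poly_mapping_eqI; simp add: lookup_add algebra_simps)+

lemma pm_scale_simps [simp]:
  "pm_scale c (p + q) = pm_scale c p + pm_scale c q"
  "pm_scale c (pm_scale d p) = pm_scale (c * d) p"
  "pm_scale 1 p = p" "pm_scale 0 p = 0" "pm_scale c 0 = 0"
  "pm_scale c (single t d) = single t (c * d)"
  by (rule poly_mapping_eqI; simp add: lookup_add algebra_simps lookup_single when_def)+

lemma pm_scale_left_distrib: "pm_scale (a + b) p = pm_scale a p + pm_scale b p"
  by (rule poly_mapping_eqI) (simp add: lookup_add algebra_simps)

lemma sum_single_lookup: "(\<Sum>t\<in>keys p. single t (lookup p t)) = p"
proof (rule poly_mapping_eqI)
  fix k
  have "lookup (\<Sum>t\<in>keys p. single t (lookup p t)) k = (\<Sum>t\<in>keys p. if t = k then lookup p t else 0)"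
    by (simp add: lookup_sum lookup_single when_def)
  also have "\<dots> = lookup p k" by (simp add: in_keys_iff)
  finally show "lookup (\<Sum>t\<in>keys p. single t (lookup p t)) k = lookup p k" .
qed

definition lin_extend ::
  "('k::comm_ring_1 \<Rightarrow> 'd::ab_group_add \<Rightarrow> 'd) \<Rightarrow> ('a \<Rightarrow> 'd) \<Rightarrow> ('a \<Rightarrow>\<^sub>0 'k) \<Rightarrow> 'd" where
  "lin_extend s f p = (\<Sum>t\<in>keys p. s (lookup p t) (f t))"

lemma lin_ext_eq_lin_extend: "lin_ext f = lin_extend pm_scale f"
  by (auto simp: lin_ext_def lin_extend_def fun_eq_iff)

context module
begin

lemma lin_extend_add: "lin_extend scale f (p + q) = lin_extend scale f p + lin_extend scale f q"
  unfolding lin_extend_def by (rule setsum_keys_plus_distrib) (auto simp: scale_left_distrib)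

lemma lin_extend_single [simp]: "lin_extend scale f (single t c) = scale c (f t)"
  unfolding lin_extend_def by auto

lemma lin_extend_scale: "lin_extend scale f (pm_scale c p) = scale c (lin_extend scale f p)"
proof -
  have "keys (pm_scale c p) \<subseteq> keys p" by (auto simp: in_keys_iff)
  then have "lin_extend scale f (pm_scale c p) = (\<Sum>t\<in>keys p. scale (lookup (pm_scale c p) t) (f t))"
    unfolding lin_extend_def by (intro sum.mono_neutral_left) (auto simp: in_keys_iff)
  then show ?thesis by (simp add: lin_extend_def scale_sum_right)
qed

lemma lin_extend_fun_add: "lin_extend scale (\<lambda>t. f t + g t) p = lin_extend scale f p + lin_extend scale g p"
  unfolding lin_extend_def by (simp add: scale_right_distrib sum.distrib)

lemma lin_extend_fun_scale: "lin_extend scale (\<lambda>t. scale c (f t)) p = scale c (lin_extend scale f p)"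
  unfolding lin_extend_def by (simp add: scale_sum_right mult.commute)

end

text \<open>Unlike module_hom, this does not require the two scalings to be modules.\<close>
definition lin_map ::
  "('k::comm_ring_1 \<Rightarrow> 'a::ab_group_add \<Rightarrow> 'a) \<Rightarrow> ('k \<Rightarrow> 'b::ab_group_add \<Rightarrow> 'b) \<Rightarrow> ('a \<Rightarrow> 'b) \<Rightarrow> bool" where
  "lin_map s1 s2 F \<longleftrightarrow> (\<forall>p q. F (p + q) = F p + F q) \<and> (\<forall>c p. F (s1 c p) = s2 c (F p))"

lemma lin_mapD_add: "lin_map s1 s2 F \<Longrightarrow> F (p + q) = F p + F q"
  by (simp add: lin_map_def)

lemma lin_mapD_scale: "lin_map s1 s2 F \<Longrightarrow> F (s1 c p) = s2 c (F p)"
  by (simp add: lin_map_def)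

lemma lin_mapD_zero: "lin_map s1 s2 F \<Longrightarrow> F 0 = 0"
  using lin_mapD_add[of s1 s2 F 0 0] by simp

lemma lin_mapD_sum_list: "lin_map s1 s2 F \<Longrightarrow> F (\<Sum>x\<leftarrow>xs. g x) = (\<Sum>x\<leftarrow>xs. F (g x))"
  by (induct xs) (auto simp: lin_mapD_add lin_mapD_zero)

lemma lin_map_module_hom: "module s1 \<Longrightarrow> module s2 \<Longrightarrow> lin_map s1 s2 F \<Longrightarrow> module_hom s1 s2 F"
  unfolding module_hom_def module_hom_axioms_def lin_map_def by simp

lemma module_hom_lin_map: "module_hom s1 s2 F \<Longrightarrow> lin_map s1 s2 F"
  unfolding module_hom_def module_hom_axioms_def lin_map_def by simp

lemma lin_map_id: "lin_map s s (\<lambda>x. x)"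
  by (simp add: lin_map_def)

lemma lin_map_comp: "lin_map s1 s2 F \<Longrightarrow> lin_map s2 s3 G \<Longrightarrow> lin_map s1 s3 (\<lambda>x. G (F x))"
  by (simp add: lin_map_def)

context module
begin

lemma lin_map_add: "lin_map s1 scale F \<Longrightarrow> lin_map s1 scale G \<Longrightarrow> lin_map s1 scale (\<lambda>x. F x + G x)"
  by (simp add: lin_map_def scale_right_distrib)

lemma lin_map_scale: "lin_map s1 scale F \<Longrightarrow> lin_map s1 scale (\<lambda>x. scale c (F x))"
  by (simp add: lin_map_def scale_right_distrib mult.commute)

lemma lin_map_zero: "lin_map s1 scale (\<lambda>x. 0)"
  by (simp add: lin_map_def)

lemma lin_map_lin_extend: "lin_map pm_scale scale (lin_extend scale f)"
  unfolding lin_map_def by (simp add: lin_extend_add lin_extend_scale)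

lemma lin_map_lin_extend_family:
  "(\<And>t. lin_map s1 scale (G t)) \<Longrightarrow> lin_map s1 scale (\<lambda>q. lin_extend scale (\<lambda>t. G t q) p)"
  unfolding lin_map_def by (simp add: lin_extend_fun_add lin_extend_fun_scale)

end

lemma lin_map_eq_lin_extend:
  assumes "lin_map pm_scale s F"
  shows "F p = lin_extend s (\<lambda>t. F (single t 1)) p"
proof -
  interpret additive F by unfold_locales (rule lin_mapD_add[OF assms])
  have "F p = F (\<Sum>t\<in>keys p. single t (lookup p t))" by (simp add: sum_single_lookup)
  also have "\<dots> = (\<Sum>t\<in>keys p. F (pm_scale (lookup p t) (single t 1)))" by (simp add: sum)
  also have "\<dots> = (\<Sum>t\<in>keys p. s (lookup p t) (F (single t 1)))"
    by (simp only: lin_mapD_scale[OF assms])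
  finally show ?thesis by (simp add: lin_extend_def)
qed

lemma lin_map_eq_on_basis:
  assumes "lin_map pm_scale s F" "lin_map pm_scale s G" "\<And>t. F (single t 1) = G (single t 1)"
  shows "F p = G p"
proof -
  have "F p = lin_extend s (\<lambda>t. F (single t 1)) p" by (rule lin_map_eq_lin_extend[OF assms(1)])
  also have "\<dots> = G p" unfolding assms(3) by (rule lin_map_eq_lin_extend[OF assms(2), symmetric])
  finally show ?thesis .
qed

lemma bilin_map_eq_on_basis:
  assumes "\<And>Q. lin_map pm_scale s (\<lambda>P. F P Q)" "\<And>Q. lin_map pm_scale s (\<lambda>P. G P Q)"
    "\<And>a. lin_map pm_scale s (\<lambda>Q. F (single a 1) Q)" "\<And>a. lin_map pm_scale s (\<lambda>Q. G (single a 1) Q)"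
    "\<And>a b. F (single a 1) (single b 1) = G (single a 1) (single b 1)"
  shows "F P Q = G P Q"
proof -
  have "F (single a 1) Q = G (single a 1) Q" for a Q
    by (rule lin_map_eq_on_basis[OF assms(3,4)]) (rule assms(5))
  then show ?thesis by (rule lin_map_eq_on_basis[OF assms(1,2)])
qed

lemma trilin_map_eq_on_basis:
  assumes "\<And>Q R. lin_map pm_scale s (\<lambda>P. F P Q R)" "\<And>Q R. lin_map pm_scale s (\<lambda>P. G P Q R)"
    "\<And>a R. lin_map pm_scale s (\<lambda>Q. F (single a 1) Q R)" "\<And>a R. lin_map pm_scale s (\<lambda>Q. G (single a 1) Q R)"
    "\<And>a b. lin_map pm_scale s (\<lambda>R. F (single a 1) (single b 1) R)"
    "\<And>a b. lin_map pm_scale s (\<lambda>R. G (single a 1) (single b 1) R)"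
    "\<And>a b c. F (single a 1) (single b 1) (single c 1) = G (single a 1) (single b 1) (single c 1)"
  shows "F P Q R = G P Q R"
proof -
  have "F (single a 1) (single b 1) R = G (single a 1) (single b 1) R" for a b R
    by (rule lin_map_eq_on_basis[OF assms(5,6)]) (rule assms(7))
  then have "F (single a 1) Q R = G (single a 1) Q R" for a Q R
    by (rule lin_map_eq_on_basis[OF assms(3,4)])
  then show ?thesis by (rule lin_map_eq_on_basis[OF assms(1,2)])
qed

lemma lin_ext_single [simp]: "lin_ext f (single t c) = pm_scale c (f t)"
  by (simp add: lin_ext_eq_lin_extend module.lin_extend_single[OF module_pm_scale])

lemma lin_map_lin_ext: "lin_map pm_scale pm_scale (lin_ext f)"
  by (simp add: lin_ext_eq_lin_extend module.lin_map_lin_extend[OF module_pm_scale])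

lemma lin_map_lin_ext_family:
  "(\<And>t. lin_map s1 pm_scale (G t)) \<Longrightarrow> lin_map s1 pm_scale (\<lambda>q. lin_ext (\<lambda>t. G t q) p)"
  by (simp add: lin_ext_eq_lin_extend module.lin_map_lin_extend_family[OF module_pm_scale])

lemmas lin_map_add_pm = module.lin_map_add[OF module_pm_scale]
lemmas lin_map_scale_pm = module.lin_map_scale[OF module_pm_scale]
lemmas lin_map_zero_pm = module.lin_map_zero[OF module_pm_scale]

section \<open>Grafting and the augmented product\<close>

definition incl :: "('a dtree \<Rightarrow>\<^sub>0 'k::comm_ring_1) \<Rightarrow> ('a dtree option \<Rightarrow>\<^sub>0 'k)" where
  "incl Q = lin_ext (\<lambda>t. single (Some t) 1) Q"

definition graft ::
  "('a dtree option \<Rightarrow>\<^sub>0 'k::comm_ring_1) \<Rightarrow> 'a \<Rightarrow> ('a dtree option \<Rightarrow>\<^sub>0 'k) \<Rightarrow> ('a dtree \<Rightarrow>\<^sub>0 'k)" where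
  "graft P y Q = lin_ext (\<lambda>a. lin_ext (\<lambda>b. single (Vert a y b) 1) Q) P"

definition aug_mult_basis ::
  "'a dtree option \<Rightarrow> 'a dtree option \<Rightarrow> ('a dtree option \<Rightarrow>\<^sub>0 'k::comm_ring_1)" where
  "aug_mult_basis a b = (case a of None \<Rightarrow> single b 1 | Some t \<Rightarrow> (case b of None \<Rightarrow> single a 1
      | Some s \<Rightarrow> incl (dprec t s + dsucc t s)))"

definition aug_mult ::
  "('a dtree option \<Rightarrow>\<^sub>0 'k::comm_ring_1) \<Rightarrow> ('a dtree option \<Rightarrow>\<^sub>0 'k) \<Rightarrow> ('a dtree option \<Rightarrow>\<^sub>0 'k)" where
  "aug_mult P Q = lin_ext (\<lambda>a. lin_ext (\<lambda>b. aug_mult_basis a b) Q) P"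

abbreviation DD_mult :: "('x, 'k::comm_ring_1) DD \<Rightarrow> ('x, 'k) DD \<Rightarrow> ('x, 'k) DD" where
  "DD_mult P Q \<equiv> DD_prec P Q + DD_succ P Q"

lemma lin_map_incl: "lin_map pm_scale pm_scale incl"
  unfolding incl_def[abs_def] by (rule lin_map_lin_ext)

lemma lin_map_graft1: "lin_map pm_scale pm_scale (\<lambda>P. graft P y Q)"
  unfolding graft_def by (rule lin_map_lin_ext)

lemma lin_map_graft2: "lin_map pm_scale pm_scale (\<lambda>Q. graft P y Q)"
  unfolding graft_def by (rule lin_map_lin_ext_family, rule lin_map_lin_ext)

lemma lin_map_aug_mult1: "lin_map pm_scale pm_scale (\<lambda>P. aug_mult P Q)"
  unfolding aug_mult_def by (rule lin_map_lin_ext)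

lemma lin_map_aug_mult2: "lin_map pm_scale pm_scale (\<lambda>Q. aug_mult P Q)"
  unfolding aug_mult_def by (rule lin_map_lin_ext_family, rule lin_map_lin_ext)

lemma lin_map_DD_prec1: "lin_map pm_scale pm_scale (\<lambda>P. DD_prec P Q)"
  unfolding DD_prec_def by (rule lin_map_lin_ext)

lemma lin_map_DD_prec2: "lin_map pm_scale pm_scale (\<lambda>Q. DD_prec P Q)"
  unfolding DD_prec_def by (rule lin_map_lin_ext_family, rule lin_map_lin_ext)

lemma lin_map_DD_succ1: "lin_map pm_scale pm_scale (\<lambda>P. DD_succ P Q)"
  unfolding DD_succ_def by (rule lin_map_lin_ext)

lemma lin_map_DD_succ2: "lin_map pm_scale pm_scale (\<lambda>Q. DD_succ P Q)"
  unfolding DD_succ_def by (rule lin_map_lin_ext_family, rule lin_map_lin_ext)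

lemma lin_map_dX: "lin_map pm_scale pm_scale (dX lam)"
  unfolding dX_def[abs_def] by (rule lin_map_lin_ext)

lemmas lin_map_intros = lin_map_id lin_map_add_pm lin_map_scale_pm lin_map_zero_pm
  lin_map_comp[OF _ lin_map_incl] lin_map_comp[OF _ lin_map_graft1] lin_map_comp[OF _ lin_map_graft2]
  lin_map_comp[OF _ lin_map_aug_mult1] lin_map_comp[OF _ lin_map_aug_mult2]
  lin_map_comp[OF _ lin_map_DD_prec1] lin_map_comp[OF _ lin_map_DD_prec2]
  lin_map_comp[OF _ lin_map_DD_succ1] lin_map_comp[OF _ lin_map_DD_succ2]
  lin_map_comp[OF _ lin_map_dX] lin_map_comp[OF _ lin_map_lin_ext]

lemmas lin_map_simps =
  lin_mapD_add[OF lin_map_incl] lin_mapD_scale[OF lin_map_incl] lin_mapD_zero[OF lin_map_incl]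
  lin_mapD_add[OF lin_map_graft1] lin_mapD_scale[OF lin_map_graft1] lin_mapD_zero[OF lin_map_graft1]
  lin_mapD_add[OF lin_map_graft2] lin_mapD_scale[OF lin_map_graft2] lin_mapD_zero[OF lin_map_graft2]
  lin_mapD_add[OF lin_map_aug_mult1] lin_mapD_scale[OF lin_map_aug_mult1] lin_mapD_zero[OF lin_map_aug_mult1]
  lin_mapD_add[OF lin_map_aug_mult2] lin_mapD_scale[OF lin_map_aug_mult2] lin_mapD_zero[OF lin_map_aug_mult2]
  lin_mapD_add[OF lin_map_DD_prec1] lin_mapD_scale[OF lin_map_DD_prec1] lin_mapD_zero[OF lin_map_DD_prec1]
  lin_mapD_add[OF lin_map_DD_prec2] lin_mapD_scale[OF lin_map_DD_prec2] lin_mapD_zero[OF lin_map_DD_prec2]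
  lin_mapD_add[OF lin_map_DD_succ1] lin_mapD_scale[OF lin_map_DD_succ1] lin_mapD_zero[OF lin_map_DD_succ1]
  lin_mapD_add[OF lin_map_DD_succ2] lin_mapD_scale[OF lin_map_DD_succ2] lin_mapD_zero[OF lin_map_DD_succ2]
  lin_mapD_add[OF lin_map_dX] lin_mapD_scale[OF lin_map_dX] lin_mapD_zero[OF lin_map_dX]

lemma incl_single [simp]: "incl (single t c) = single (Some t) c"
  by (simp add: incl_def)

lemma graft_single: "graft (single a c) y (single b d) = single (Vert a y b) (c * d)"
  by (simp add: graft_def)

lemma aug_mult_single: "aug_mult (single a 1) (single b 1) = aug_mult_basis a b"
  by (simp add: aug_mult_def)

lemma DD_prec_single [simp]: "DD_prec (single t 1) (single s 1) = dprec t s"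
  by (simp add: DD_prec_def)

lemma DD_succ_single [simp]: "DD_succ (single t 1) (single s 1) = dsucc t s"
  by (simp add: DD_succ_def)

lemma graftR_eq_graft: "graftR a x Q = graft (single a 1) x (incl Q)"
proof (rule lin_map_eq_on_basis[where s = pm_scale and F = "graftR a x"])
  show "lin_map pm_scale pm_scale (graftR a x)"
    unfolding graftR_def[abs_def] by (rule lin_map_lin_ext)
  show "lin_map pm_scale pm_scale (\<lambda>Q. graft (single a 1) x (incl Q))"
    by (intro lin_map_intros)
qed (simp add: graftR_def graft_single)

lemma graftL_eq_graft: "graftL P y r = graft (incl P) y (single r 1)"
proof (rule lin_map_eq_on_basis[where s = pm_scale and F = "\<lambda>P. graftL P y r"])
  show "lin_map pm_scale pm_scale (\<lambda>P. graftL P y r)"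
    unfolding graftL_def by (rule lin_map_lin_ext)
  show "lin_map pm_scale pm_scale (\<lambda>P. graft (incl P) y (single r 1))"
    by (intro lin_map_intros)
qed (simp add: graftL_def graft_single)

lemma dprec_Vert: "dprec (Vert a x b) s = graft (single a 1) x (aug_mult (single b 1) (single (Some s) 1))"
  by (cases b) (simp_all add: graftR_eq_graft aug_mult_basis_def graft_single aug_mult_single)

lemma dsucc_Vert: "dsucc t (Vert c y d) = graft (aug_mult (single (Some t) 1) (single c 1)) y (single d 1)"
  by (cases c) (simp_all add: graftL_eq_graft aug_mult_basis_def graft_single aug_mult_single)

declare dprec.simps [simp del] dsucc.simps [simp del]

lemma DD_prec_graft: "DD_prec (graft P x Q) S = graft P x (aug_mult Q (incl S))"
  by (rule trilin_map_eq_on_basis[where s = pm_scale and F = "\<lambda>P Q S. DD_prec (graft P x Q) S"];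
      (intro lin_map_intros)?) (simp add: dprec_Vert graft_single)

lemma DD_succ_graft: "DD_succ T (graft P y Q) = graft (aug_mult (incl T) P) y Q"
  by (rule trilin_map_eq_on_basis[where s = pm_scale and F = "\<lambda>T P Q. DD_succ T (graft P y Q)"];
      (intro lin_map_intros)?) (simp add: dsucc_Vert graft_single)

lemma incl_DD_mult: "incl (DD_mult T S) = aug_mult (incl T) (incl S)"
  by (rule bilin_map_eq_on_basis[where s = pm_scale and F = "\<lambda>T S. incl (DD_mult T S)"];
      (intro lin_map_intros)?) (simp add: aug_mult_basis_def aug_mult_single)

lemma aug_mult_leaf_left: "aug_mult (single None 1) Q = Q"
  by (rule lin_map_eq_on_basis[where s = pm_scale and F = "\<lambda>Q. aug_mult (single None 1) Q"];
      (intro lin_map_intros)?) (simp add: aug_mult_basis_def aug_mult_single)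

lemma aug_mult_leaf_right: "aug_mult P (single None 1) = P"
  by (rule lin_map_eq_on_basis[where s = pm_scale and F = "\<lambda>P. aug_mult P (single None 1)"];
      (intro lin_map_intros)?) (simp add: aug_mult_basis_def aug_mult_single split: option.split)

section \<open>The dendriform identities\<close>

lemma aug_mult_assoc_Some:
  fixes t s u :: "('x \<times> nat) dtree"
  assumes "DD_prec (DD_prec (single t 1) (single s 1)) (single u (1::'k::comm_ring_1))
      = DD_prec (single t 1) (DD_mult (single s 1) (single u 1))"
    and "DD_prec (DD_succ (single t 1) (single s 1)) (single u (1::'k))
      = DD_succ (single t 1) (DD_prec (single s 1) (single u 1))"
    and "DD_succ (DD_mult (single t 1) (single s 1)) (single u (1::'k))
      = DD_succ (single t 1) (DD_succ (single s 1) (single u 1))"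
  shows "aug_mult (aug_mult (single (Some t) 1) (single (Some s) 1)) (single (Some u) 1)
    = aug_mult (single (Some t) 1) (aug_mult (single (Some s) 1) (single (Some u) (1::'k)))"
proof -
  have "DD_mult (DD_mult (single t 1) (single s 1)) (single u (1::'k))
      = DD_mult (single t 1) (DD_mult (single s 1) (single u 1))"
    using assms by (simp add: lin_map_simps add.assoc)
  then have "incl (DD_mult (DD_mult (single t 1) (single s 1)) (single u (1::'k)))
      = incl (DD_mult (single t 1) (DD_mult (single s 1) (single u 1)))"
    by (rule arg_cong)
  then show ?thesis by (simp only: incl_DD_mult incl_single)
qed

text \<open>The identities for t, s, u need associativity of \<open>\<star>\<close> only on the triples (right subtree of t, s, u)
  and (t, s, left subtree of u), which the identities for those smaller triples provide.\<close>
lemma dendriform_identities_basis: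
  fixes t s u :: "('x \<times> nat) dtree"
  shows "DD_prec (DD_prec (single t 1) (single s 1)) (single u (1::'k::comm_ring_1))
      = DD_prec (single t 1) (DD_mult (single s 1) (single u 1))
    \<and> DD_prec (DD_succ (single t 1) (single s 1)) (single u (1::'k))
      = DD_succ (single t 1) (DD_prec (single s 1) (single u 1))
    \<and> DD_succ (DD_mult (single t 1) (single s 1)) (single u (1::'k))
      = DD_succ (single t 1) (DD_succ (single s 1) (single u 1))"
proof (induction "size t + size u" arbitrary: t s u rule: less_induct)
  case less
  obtain a x b where t: "t = Vert a x b" by (cases t)
  obtain c2 y2 d2 where s: "s = Vert c2 y2 d2" by (cases s)
  obtain c y d where u: "u = Vert c y d" by (cases u)
  have assoc_right: "aug_mult (aug_mult (single b 1) (single (Some s) 1)) (single (Some u) 1)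
      = aug_mult (single b 1) (aug_mult (single (Some s) 1) (single (Some u) (1::'k)))"
  proof (cases b)
    case None
    then show ?thesis by (simp add: aug_mult_leaf_left)
  next
    case (Some b')
    have "size b' + size u < size t + size u" using t Some by simp
    from less[OF this] show ?thesis unfolding Some by (intro aug_mult_assoc_Some) auto
  qed
  have assoc_left: "aug_mult (aug_mult (single (Some t) 1) (single (Some s) 1)) (single c 1)
      = aug_mult (single (Some t) 1) (aug_mult (single (Some s) 1) (single c (1::'k)))"
  proof (cases c)
    case None
    then show ?thesis by (simp add: aug_mult_leaf_right)
  next
    case (Some c')
    have "size t + size c' < size t + size u" using u Some by simp
    from less[OF this] show ?thesis unfolding Some by (intro aug_mult_assoc_Some) auto
  qed
  have T: "single t (1::'k) = graft (single a 1) x (single b 1)" by (simp add: t graft_single)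
  have S: "single s (1::'k) = graft (single c2 1) y2 (single d2 1)" by (simp add: s graft_single)
  have U: "single u (1::'k) = graft (single c 1) y (single d 1)" by (simp add: u graft_single)
  have "DD_prec (DD_prec (single t 1) (single s 1)) (single u (1::'k))
      = graft (single a 1) x (aug_mult (aug_mult (single b 1) (single (Some s) 1)) (single (Some u) 1))"
    unfolding T DD_prec_graft by simp
  also have "\<dots> = DD_prec (single t 1) (DD_mult (single s 1) (single u 1))"
    unfolding assoc_right T DD_prec_graft incl_DD_mult by simp
  finally have prec_prec: "DD_prec (DD_prec (single t 1) (single s 1)) (single u (1::'k))
      = DD_prec (single t 1) (DD_mult (single s 1) (single u 1))" .
  have prec_succ: "DD_prec (DD_succ (single t 1) (single s 1)) (single u (1::'k))
      = DD_succ (single t 1) (DD_prec (single s 1) (single u 1))"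
    unfolding S DD_prec_graft DD_succ_graft ..
  have "DD_succ (DD_mult (single t 1) (single s 1)) (single u (1::'k))
      = graft (aug_mult (aug_mult (single (Some t) 1) (single (Some s) 1)) (single c 1)) y (single d 1)"
    unfolding U DD_succ_graft incl_DD_mult by simp
  also have "\<dots> = DD_succ (single t 1) (DD_succ (single s 1) (single u 1))"
    unfolding assoc_left U DD_succ_graft by simp
  finally show ?case using prec_prec prec_succ by blast
qed

lemma dendriform_algebra_DD:
  "dendriform_algebra (pm_scale :: 'k::comm_ring_1 \<Rightarrow> ('x, 'k) DD \<Rightarrow> ('x, 'k) DD) DD_prec DD_succ"
  unfolding dendriform_algebra_def bilinear_op_def
proof (intro conjI allI)
  note hom = lin_map_module_hom[OF module_pm_scale module_pm_scale]
  show "module_hom pm_scale pm_scale (DD_prec a)" "module_hom pm_scale pm_scale (DD_succ a)"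
    "module_hom pm_scale pm_scale (\<lambda>a. DD_prec a b)" "module_hom pm_scale pm_scale (\<lambda>a. DD_succ a b)"
    for a b :: "('x, 'k) DD"
    by (rule hom[OF lin_map_DD_prec2] hom[OF lin_map_DD_succ2]
        hom[OF lin_map_DD_prec1] hom[OF lin_map_DD_succ1])+
  show "DD_prec (DD_prec a b) c = DD_prec a (DD_mult b c)" for a b c :: "('x, 'k) DD"
    by (rule trilin_map_eq_on_basis[where s = pm_scale and F = "\<lambda>a b c. DD_prec (DD_prec a b) c"];
        (intro lin_map_intros)?) (use dendriform_identities_basis in blast)
  show "DD_prec (DD_succ a b) c = DD_succ a (DD_prec b c)" for a b c :: "('x, 'k) DD"
    by (rule trilin_map_eq_on_basis[where s = pm_scale and F = "\<lambda>a b c. DD_prec (DD_succ a b) c"];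
        (intro lin_map_intros)?) (use dendriform_identities_basis in blast)
  show "DD_succ (DD_mult a b) c = DD_succ a (DD_succ b c)" for a b c :: "('x, 'k) DD"
    by (rule trilin_map_eq_on_basis[where s = pm_scale and F = "\<lambda>a b c. DD_succ (DD_mult a b) c"];
        (intro lin_map_intros)?) (use dendriform_identities_basis in blast)
qed (rule module_pm_scale)

section \<open>The derivation\<close>

text \<open>\<open>bump_sum \<alpha> a\<close> is \<open>\<Sum>\<^sub>S \<alpha> |S| \<cdot> a\<^sub>S\<close> over all sets S of vertices of a (including S = {}), so that
  \<open>bump_sum id_weight\<close> is the identity and \<open>bump_sum (deriv_weight \<lambda>)\<close> is \<open>d\<^sub>X\<close> extended by \<open>d |  = 0\<close>.
  The weight laws below are stated as sums of products \<open>\<alpha> p * \<beta> q\<close> so that they split a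
  bump_sum over a graft into grafts of bump_sums (bump_sum_graft).\<close>

definition id_weight :: "nat \<Rightarrow> 'k::comm_ring_1" where
  "id_weight k = (if k = 0 then 1 else 0)"

definition deriv_weight :: "'k::comm_ring_1 \<Rightarrow> nat \<Rightarrow> 'k" where
  "deriv_weight lam k = (if k = 0 then 0 else lam ^ (k - 1))"

definition bump_sum ::
  "(nat \<Rightarrow> 'k::comm_ring_1) \<Rightarrow> ('x \<times> nat) dtree option \<Rightarrow> (('x \<times> nat) dtree option \<Rightarrow>\<^sub>0 'k)" where
  "bump_sum \<alpha> a = (\<Sum>(a', k)\<leftarrow>subsets_bump a. pm_scale (\<alpha> k) (single a' 1))"

lemma id_weight_add: "id_weight (p + q) = id_weight p * id_weight q"
  by (simp add: id_weight_def)

lemma id_weight_Suc_add: "id_weight (Suc (p + q)) = id_weight p * (0 * id_weight q)"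
  by (simp add: id_weight_def)

lemma deriv_weight_add:
  "deriv_weight lam (p + q) = deriv_weight lam p * id_weight q + id_weight p * deriv_weight lam q
     + (lam * deriv_weight lam p) * deriv_weight lam q"
  by (cases p; cases q) (simp_all add: deriv_weight_def id_weight_def power_add)

lemma deriv_weight_Suc_add:
  "deriv_weight lam (Suc (p + q)) = id_weight p * id_weight q + (lam * deriv_weight lam p) * id_weight q
     + id_weight p * (lam * deriv_weight lam q) + (lam * lam * deriv_weight lam p) * deriv_weight lam q"
  by (cases p; cases q) (simp_all add: deriv_weight_def id_weight_def power_add)

lemma sum_list_map_concat: "(\<Sum>y\<leftarrow>concat (map f xs). g y) = (\<Sum>x\<leftarrow>xs. \<Sum>y\<leftarrow>f x. g y)"
  by (induct xs) auto

lemma bump_sum_Vert: "bump_sum \<alpha> (Some (Vert l (x, n) r)) =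
   (\<Sum>(l', kl)\<leftarrow>subsets_bump l. \<Sum>(r', kr)\<leftarrow>subsets_bump r.
      pm_scale (\<alpha> (kl + kr)) (incl (graft (single l' 1) (x, n) (single r' 1))))
 + (\<Sum>(l', kl)\<leftarrow>subsets_bump l. \<Sum>(r', kr)\<leftarrow>subsets_bump r.
      pm_scale (\<alpha> (Suc (kl + kr))) (incl (graft (single l' 1) (x, Suc n) (single r' 1))))"
  unfolding bump_sum_def by (simp add: sum_list_map_concat split_def graft_single sum_list_addf o_def)

lemma sum_list_graft: "(\<Sum>(l', kl)\<leftarrow>L. \<Sum>(r', kr)\<leftarrow>M. pm_scale (\<alpha> kl * \<beta> kr) (incl (graft (single l' 1) y (single r' 1))))
  = incl (graft (\<Sum>(l', kl)\<leftarrow>L. pm_scale (\<alpha> kl) (single l' 1)) y (\<Sum>(r', kr)\<leftarrow>M. pm_scale (\<beta> kr) (single r' 1)))"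
proof -
  have inner: "(\<Sum>(r', kr)\<leftarrow>M. pm_scale (c * \<beta> kr) (incl (graft P y (single r' 1))))
      = incl (graft (pm_scale c P) y (\<Sum>(r', kr)\<leftarrow>M. pm_scale (\<beta> kr) (single r' 1)))" for c P
    by (induct M) (auto simp: lin_map_simps simp del: pm_scale_simps(6))
  show ?thesis
    by (induct L) (auto simp: lin_map_simps inner simp del: pm_scale_simps(6))
qed

lemma bump_sum_graft:
  "(\<Sum>(l', kl)\<leftarrow>subsets_bump l. \<Sum>(r', kr)\<leftarrow>subsets_bump r.
      pm_scale (\<alpha> kl * \<beta> kr) (incl (graft (single l' 1) y (single r' 1))))
   = incl (graft (bump_sum \<alpha> l) y (bump_sum \<beta> r))"
  unfolding bump_sum_def by (rule sum_list_graft)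

lemma sum_list_sum_list_scale_add:
  "(\<Sum>(l', kl)\<leftarrow>L. \<Sum>(r', kr)\<leftarrow>M. pm_scale (f kl kr + g kl kr) (E l' r'))
   = (\<Sum>(l', kl)\<leftarrow>L. \<Sum>(r', kr)\<leftarrow>M. pm_scale (f kl kr) (E l' r'))
   + (\<Sum>(l', kl)\<leftarrow>L. \<Sum>(r', kr)\<leftarrow>M. pm_scale (g kl kr) (E l' r'))"
  by (simp add: split_def sum_list_addf pm_scale_left_distrib)

lemma bump_sum_scale: "bump_sum (\<lambda>k. c * \<alpha> k) a = pm_scale c (bump_sum \<alpha> a)"
  unfolding bump_sum_def by (subst lin_mapD_sum_list[OF lin_map_scale_pm[OF lin_map_id]]) (simp add: split_def)

lemma bump_sum_id_weight: "bump_sum id_weight a = single a (1::'k::comm_ring_1)"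
proof (cases a)
  case None
  then show ?thesis by (simp add: bump_sum_def id_weight_def)
next
  case (Some t)
  have "bump_sum id_weight (Some t) = single (Some t) (1::'k)"
  proof (induction t)
    case (Vert l xn r)
    obtain x n where xn: "xn = (x, n)" by (cases xn)
    have "bump_sum id_weight l = single l (1::'k)"
      using Vert(1) by (cases l) (auto simp: bump_sum_def id_weight_def)
    moreover have "bump_sum id_weight r = single r (1::'k)"
      using Vert(2) by (cases r) (auto simp: bump_sum_def id_weight_def)
    ultimately show ?case
      unfolding xn bump_sum_Vert id_weight_add id_weight_Suc_add bump_sum_graft bump_sum_scale
      by (simp add: graft_single lin_map_simps)
  qed
  then show ?thesis using Some by simp
qed

lemma bump_sum_deriv_weight_Vert: "bump_sum (deriv_weight lam) (Some (Vert l (x, n) r)) = incl (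
    graft (bump_sum (deriv_weight lam) l) (x, n) (single r 1)
  + graft (single l 1) (x, n) (bump_sum (deriv_weight lam) r)
  + pm_scale lam (graft (bump_sum (deriv_weight lam) l) (x, n) (bump_sum (deriv_weight lam) r))
  + graft (single l 1) (x, Suc n) (single r 1)
  + pm_scale lam (graft (bump_sum (deriv_weight lam) l) (x, Suc n) (single r 1))
  + pm_scale lam (graft (single l 1) (x, Suc n) (bump_sum (deriv_weight lam) r))
  + pm_scale (lam * lam) (graft (bump_sum (deriv_weight lam) l) (x, Suc n) (bump_sum (deriv_weight lam) r)))"
  unfolding bump_sum_Vert deriv_weight_add deriv_weight_Suc_add sum_list_sum_list_scale_add
    bump_sum_graft bump_sum_id_weight bump_sum_scale
  by (simp add: lin_map_simps add.assoc)

definition dAug :: "'k::comm_ring_1 \<Rightarrow> (('x \<times> nat) dtree option \<Rightarrow>\<^sub>0 'k) \<Rightarrow> (('x \<times> nat) dtree option \<Rightarrow>\<^sub>0 'k)" where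
  "dAug lam P = lin_ext (bump_sum (deriv_weight lam)) P"

lemma lin_map_dAug: "lin_map pm_scale pm_scale (dAug lam)"
  unfolding dAug_def[abs_def] by (rule lin_map_lin_ext)

lemmas lin_map_intros_dAug = lin_map_intros lin_map_comp[OF _ lin_map_dAug]

lemmas lin_map_simps_dAug = lin_map_simps
  lin_mapD_add[OF lin_map_dAug] lin_mapD_scale[OF lin_map_dAug] lin_mapD_zero[OF lin_map_dAug]

lemma dAug_single: "dAug lam (single a 1) = bump_sum (deriv_weight lam) a"
  by (simp add: dAug_def)

lemma dAug_leaf [simp]: "dAug lam (single None 1) = 0"
  by (simp add: dAug_def bump_sum_def deriv_weight_def)

lemma subsets_bump_Some_not_None: "(t', k) \<in> set (subsets_bump (Some t)) \<Longrightarrow> t' \<noteq> None"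
  by (cases t) auto

lemma incl_dX_basis: "incl (dX_basis lam t) = bump_sum (deriv_weight lam) (Some t)"
proof -
  have "incl (dX_basis lam t) = (\<Sum>x\<leftarrow>subsets_bump (Some t).
      incl (case x of (t', k) \<Rightarrow> if k = 0 then 0 else single (the t') (lam ^ (k - 1))))"
    unfolding dX_basis_def by (rule lin_mapD_sum_list[OF lin_map_incl])
  also have "\<dots> = bump_sum (deriv_weight lam) (Some t)"
    unfolding bump_sum_def
    by (rule arg_cong[where f = sum_list], rule map_cong[OF refl])
       (auto simp: deriv_weight_def lin_map_simps dest: subsets_bump_Some_not_None)
  finally show ?thesis .
qed

definition incl_inv :: "('a dtree option \<Rightarrow>\<^sub>0 'k::comm_ring_1) \<Rightarrow> ('a dtree \<Rightarrow>\<^sub>0 'k)" where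
  "incl_inv Q = lin_ext (\<lambda>a. case a of None \<Rightarrow> 0 | Some t \<Rightarrow> single t 1) Q"

lemma incl_inv_incl: "incl_inv (incl P) = P"
  by (rule lin_map_eq_on_basis[where s = pm_scale and F = "\<lambda>P. incl_inv (incl P)" and G = "\<lambda>P. P"])
     (auto simp: incl_inv_def[abs_def] intro!: lin_map_intros)

lemma incl_inject: "incl P = incl Q \<Longrightarrow> P = Q"
  by (metis incl_inv_incl)

lemma dAug_incl: "dAug lam (incl Q) = incl (dX lam Q)"
  by (rule lin_map_eq_on_basis[where s = pm_scale and F = "\<lambda>Q. dAug lam (incl Q)"];
      (intro lin_map_intros_dAug)?) (simp add: dAug_single dX_def incl_dX_basis)

lemma dAug_Some: "dAug lam (single (Some t) 1) = incl (dX lam (single t 1))"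
  using dAug_incl[of lam "single t 1"] by simp

text \<open>Either the root is not bumped (a weight-\<lambda> Leibniz rule on the two subtrees) or it is, and then
  each subtree contributes \<open>P + \<lambda> d P\<close>.\<close>
lemma dX_graft:
  fixes lam :: "'k::comm_ring_1"
  shows "dX lam (graft P (x, n) Q) =
      graft (dAug lam P) (x, n) Q + graft P (x, n) (dAug lam Q)
    + pm_scale lam (graft (dAug lam P) (x, n) (dAug lam Q))
    + graft P (x, Suc n) Q + pm_scale lam (graft (dAug lam P) (x, Suc n) Q)
    + pm_scale lam (graft P (x, Suc n) (dAug lam Q))
    + pm_scale (lam * lam) (graft (dAug lam P) (x, Suc n) (dAug lam Q))"
proof (rule bilin_map_eq_on_basis[where s = pm_scale and F = "\<lambda>P Q. dX lam (graft P (x, n) Q)"];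
    (intro lin_map_intros_dAug)?)
  fix a b
  show "dX lam (graft (single a 1) (x, n) (single b 1)) =
      graft (dAug lam (single a 1)) (x, n) (single b 1) + graft (single a 1) (x, n) (dAug lam (single b 1))
    + pm_scale lam (graft (dAug lam (single a 1)) (x, n) (dAug lam (single b 1)))
    + graft (single a 1) (x, Suc n) (single b 1)
    + pm_scale lam (graft (dAug lam (single a 1)) (x, Suc n) (single b 1))
    + pm_scale lam (graft (single a 1) (x, Suc n) (dAug lam (single b 1)))
    + pm_scale (lam * lam) (graft (dAug lam (single a 1)) (x, Suc n) (dAug lam (single b (1::'k))))"
    by (rule incl_inject)
       (simp only: graft_single[of a 1 "(x, n)" b 1] mult_1_right dX_def lin_ext_single
        pm_scale_simps(3) incl_dX_basis bump_sum_deriv_weight_Vert dAug_single)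
qed

abbreviation leibniz ::
  "(('b \<Rightarrow>\<^sub>0 'k) \<Rightarrow> ('b \<Rightarrow>\<^sub>0 'k) \<Rightarrow> ('b \<Rightarrow>\<^sub>0 'k)) \<Rightarrow> (('b \<Rightarrow>\<^sub>0 'k) \<Rightarrow> ('b \<Rightarrow>\<^sub>0 'k)) \<Rightarrow> 'k::comm_ring_1
     \<Rightarrow> ('b \<Rightarrow>\<^sub>0 'k) \<Rightarrow> ('b \<Rightarrow>\<^sub>0 'k) \<Rightarrow> ('b \<Rightarrow>\<^sub>0 'k)" where
  "leibniz m d lam P Q \<equiv> m (d P) Q + m P (d Q) + pm_scale lam (m (d P) (d Q))"

lemma dAug_aug_mult_Some:
  fixes lam :: "'k::comm_ring_1"
  assumes "dX lam (DD_prec (single t 1) (single s 1)) = leibniz DD_prec (dX lam) lam (single t 1) (single s 1)"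
    and "dX lam (DD_succ (single t 1) (single s 1)) = leibniz DD_succ (dX lam) lam (single t 1) (single s 1)"
  shows "dAug lam (aug_mult (single (Some t) 1) (single (Some s) 1))
    = leibniz aug_mult (dAug lam) lam (single (Some t) 1) (single (Some s) 1)"
proof -
  have "dAug lam (aug_mult (incl (single t 1)) (incl (single s 1)))
      = incl (dX lam (DD_mult (single t 1) (single s (1::'k))))"
    unfolding incl_DD_mult[symmetric] dAug_incl ..
  also have "\<dots> = incl (leibniz DD_prec (dX lam) lam (single t 1) (single s 1)
      + leibniz DD_succ (dX lam) lam (single t 1) (single s 1))"
    using assms by (simp only: lin_map_simps)
  also have "\<dots> = leibniz aug_mult (dAug lam) lam (incl (single t 1)) (incl (single s 1))"
    unfolding dAug_incl incl_DD_mult[symmetric] by (simp only: lin_map_simps add_ac pm_scale_simps(1))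
  finally show ?thesis by simp
qed

lemma dAug_aug_mult_leaf_left:
  "dAug lam (aug_mult (single None 1) Q) = leibniz aug_mult (dAug lam) lam (single None 1) Q"
  by (simp add: aug_mult_leaf_left lin_map_simps_dAug)

lemma dAug_aug_mult_leaf_right:
  "dAug lam (aug_mult P (single None 1)) = leibniz aug_mult (dAug lam) lam P (single None 1)"
  by (simp add: aug_mult_leaf_right lin_map_simps_dAug)

lemma dX_leibniz_basis:
  fixes lam :: "'k::comm_ring_1" and t s :: "('x \<times> nat) dtree"
  shows "dX lam (DD_prec (single t 1) (single s 1)) = leibniz DD_prec (dX lam) lam (single t 1) (single s 1)
    \<and> dX lam (DD_succ (single t 1) (single s 1)) = leibniz DD_succ (dX lam) lam (single t 1) (single s 1)"
proof (induction "size t + size s" arbitrary: t s rule: less_induct)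
  case less
  obtain a x n b where t: "t = Vert a (x, n) b" by (metis dtree.exhaust prod.exhaust)
  obtain c y m d where s: "s = Vert c (y, m) d" by (metis dtree.exhaust prod.exhaust)
  have right: "dAug lam (aug_mult (single b 1) (single (Some s) 1))
      = leibniz aug_mult (dAug lam) lam (single b 1) (single (Some s) (1::'k))"
  proof (cases b)
    case None
    then show ?thesis by (simp only: dAug_aug_mult_leaf_left)
  next
    case (Some b')
    have "size b' + size s < size t + size s" using t Some by simp
    from less[OF this] show ?thesis unfolding Some by (intro dAug_aug_mult_Some) auto
  qed
  have left: "dAug lam (aug_mult (single (Some t) 1) (single c 1))
      = leibniz aug_mult (dAug lam) lam (single (Some t) 1) (single c (1::'k))"
  proof (cases c)
    case None
    then show ?thesis by (simp only: dAug_aug_mult_leaf_right)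
  next
    case (Some c')
    have "size t + size c' < size t + size s" using s Some by simp
    from less[OF this] show ?thesis unfolding Some by (intro dAug_aug_mult_Some) auto
  qed
  have T: "single t (1::'k) = graft (single a 1) (x, n) (single b 1)" by (simp add: t graft_single)
  have S: "single s (1::'k) = graft (single c 1) (y, m) (single d 1)" by (simp add: s graft_single)
  have "dX lam (DD_prec (single t 1) (single s 1)) = leibniz DD_prec (dX lam) lam (single t 1) (single s (1::'k))"
    unfolding T DD_prec_graft dX_graft incl_single right dAug_Some
    by (simp add: lin_map_simps_dAug DD_prec_graft add_ac mult_ac)
  moreover have "dX lam (DD_succ (single t 1) (single s 1)) = leibniz DD_succ (dX lam) lam (single t 1) (single s (1::'k))"
    unfolding S DD_succ_graft dX_graft incl_single left dAug_Some
    by (simp add: lin_map_simps_dAug DD_succ_graft add_ac mult_ac)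
  ultimately show ?case ..
qed

lemma diff_dendriform_algebra_DD:
  "diff_dendriform_algebra (pm_scale :: 'k::comm_ring_1 \<Rightarrow> ('x, 'k) DD \<Rightarrow> ('x, 'k) DD)
     DD_prec DD_succ (dX lam) lam"
  unfolding diff_dendriform_algebra_def derivation_wt_def
proof (intro conjI allI)
  show "dendriform_algebra pm_scale DD_prec (DD_succ :: ('x, 'k) DD \<Rightarrow> _)"
    by (rule dendriform_algebra_DD)
  show "module_hom pm_scale pm_scale (dX lam :: ('x, 'k) DD \<Rightarrow> _)"
    by (rule lin_map_module_hom[OF module_pm_scale module_pm_scale lin_map_dX])
  show "dX lam (DD_prec a b) = leibniz DD_prec (dX lam) lam a b" for a b :: "('x, 'k) DD"
    by (rule bilin_map_eq_on_basis[where s = pm_scale and F = "\<lambda>a b. dX lam (DD_prec a b)"];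
        (intro lin_map_intros)?) (use dX_leibniz_basis in blast)
  show "dX lam (DD_succ a b) = leibniz DD_succ (dX lam) lam a b" for a b :: "('x, 'k) DD"
    by (rule bilin_map_eq_on_basis[where s = pm_scale and F = "\<lambda>a b. dX lam (DD_succ a b)"];
        (intro lin_map_intros)?) (use dX_leibniz_basis in blast)
qed

lemma dX_corolla: "dX lam (single (Vert None (x, n) None) 1) = single (Vert None (x, Suc n) None) (1::'k::comm_ring_1)"
proof -
  have "dX lam (single (Vert None (x, n) None) 1) = dX lam (graft (single None 1) (x, n) (single None (1::'k)))"
    by (simp add: graft_single)
  also have "\<dots> = graft (single None 1) (x, Suc n) (single None (1::'k))"
    by (simp only: dX_graft dAug_leaf lin_map_simps_dAug pm_scale_simps add_0_left add_0_right)
  also have "\<dots> = single (Vert None (x, Suc n) None) (1::'k)"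
    by (simp add: graft_single)
  finally show ?thesis .
qed

section \<open>The universal property\<close>

text \<open>The value that the universal property forces on \<open>l \<or>\<^sub>x\<^sub>(\<^sub>n\<^sub>) r\<close>, namely
  \<open>(l \<succ> d\<^sup>n(f x)) \<prec> r\<close>, where an absent subtree (the leaf |) is simply left out.\<close>
primrec tree_eval ::
  "('d \<Rightarrow> 'd \<Rightarrow> 'd) \<Rightarrow> ('d \<Rightarrow> 'd \<Rightarrow> 'd) \<Rightarrow> ('d \<Rightarrow> 'd) \<Rightarrow> ('x \<Rightarrow> 'd) \<Rightarrow> ('x \<times> nat) dtree \<Rightarrow> 'd" where
  "tree_eval precD succD dD f (Vert a xn b) =
     (let X = (dD ^^ snd xn) (f (fst xn));
          L = (case map_option (tree_eval precD succD dD f) a of None \<Rightarrow> X | Some A \<Rightarrow> succD A X)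
      in (case map_option (tree_eval precD succD dD f) b of None \<Rightarrow> L | Some B \<Rightarrow> precD L B))"

locale diff_dendriform_target =
  fixes sD :: "'k::comm_ring_1 \<Rightarrow> 'd::ab_group_add \<Rightarrow> 'd" and precD succD :: "'d \<Rightarrow> 'd \<Rightarrow> 'd"
    and dD :: "'d \<Rightarrow> 'd" and lam :: 'k and f :: "'x \<Rightarrow> 'd"
  assumes diff_dendriform: "diff_dendriform_algebra sD precD succD dD lam"
begin

lemma module_target: "module sD"
  using diff_dendriform by (simp add: diff_dendriform_algebra_def dendriform_algebra_def)

lemma lin_map_precD1: "lin_map sD sD (\<lambda>a. precD a c)"
  and lin_map_precD2: "lin_map sD sD (\<lambda>c. precD a c)"
  and lin_map_succD1: "lin_map sD sD (\<lambda>a. succD a c)"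
  and lin_map_succD2: "lin_map sD sD (\<lambda>c. succD a c)"
  and lin_map_dD: "lin_map sD sD dD"
  using diff_dendriform
  unfolding diff_dendriform_algebra_def dendriform_algebra_def bilinear_op_def derivation_wt_def
  by (auto intro: module_hom_lin_map)

lemma precD_precD: "precD (precD a b) c = precD a (precD b c + succD b c)"
  and precD_succD: "precD (succD a b) c = succD a (precD b c)"
  and succD_sum: "succD (precD a b + succD a b) c = succD a (succD b c)"
  and dD_precD: "dD (precD a b) = precD (dD a) b + precD a (dD b) + sD lam (precD (dD a) (dD b))"
  and dD_succD: "dD (succD a b) = succD (dD a) b + succD a (dD b) + sD lam (succD (dD a) (dD b))"
  using diff_dendriform unfolding diff_dendriform_algebra_def dendriform_algebra_def derivation_wt_def
  by auto

abbreviation eval :: "('x \<times> nat) dtree \<Rightarrow> 'd" where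
  "eval \<equiv> tree_eval precD succD dD f"

abbreviation gen :: "'x \<Rightarrow> nat \<Rightarrow> 'd" where
  "gen x n \<equiv> (dD ^^ n) (f x)"

definition lift :: "('x, 'k) DD \<Rightarrow> 'd" where
  "lift = lin_extend sD eval"

text \<open>\<open>succ_left P X\<close> and \<open>prec_right Z Q\<close> evaluate \<open>P \<succ> X\<close> and \<open>Z \<prec> Q\<close> in D for P, Q in the augmented
  space, reading the leaf | as a left unit of \<open>\<succ>\<close> and a right unit of \<open>\<prec>\<close>.\<close>
definition succ_left :: "(('x \<times> nat) dtree option \<Rightarrow>\<^sub>0 'k) \<Rightarrow> 'd \<Rightarrow> 'd" where
  "succ_left P X = lin_extend sD (\<lambda>a. case a of None \<Rightarrow> X | Some t \<Rightarrow> succD (eval t) X) P"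

definition prec_right :: "'d \<Rightarrow> (('x \<times> nat) dtree option \<Rightarrow>\<^sub>0 'k) \<Rightarrow> 'd" where
  "prec_right Z Q = lin_extend sD (\<lambda>b. case b of None \<Rightarrow> Z | Some t \<Rightarrow> precD Z (eval t)) Q"

definition dd_extension :: "(('x, 'k) DD \<Rightarrow> 'd) \<Rightarrow> bool" where
  "dd_extension h \<longleftrightarrow> module_hom pm_scale sD h
     \<and> (\<forall>a b. h (DD_prec a b) = precD (h a) (h b))
     \<and> (\<forall>a b. h (DD_succ a b) = succD (h a) (h b))
     \<and> (\<forall>a. dD (h a) = h (dX lam a))
     \<and> (\<forall>x. h (jX x) = f x)"

lemma lin_map_lift: "lin_map pm_scale sD lift"
  unfolding lift_def by (rule module.lin_map_lin_extend[OF module_target])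

lemma lin_map_succ_left: "lin_map pm_scale sD (\<lambda>P. succ_left P X)"
  unfolding succ_left_def by (rule module.lin_map_lin_extend[OF module_target])

lemma lin_map_prec_right2: "lin_map pm_scale sD (\<lambda>Q. prec_right Z Q)"
  unfolding prec_right_def by (rule module.lin_map_lin_extend[OF module_target])

lemma lin_map_prec_right1: "lin_map sD sD (\<lambda>Z. prec_right Z Q)"
  unfolding prec_right_def
proof (rule module.lin_map_lin_extend_family[OF module_target])
  show "lin_map sD sD (\<lambda>Z. case b of None \<Rightarrow> Z | Some t \<Rightarrow> precD Z (eval t))" for b
    by (cases b) (simp_all add: lin_map_id lin_map_precD1)
qed

lemma lift_single: "lift (single t 1) = eval t"
  by (simp add: lift_def module.lin_extend_single[OF module_target] module.scale_one[OF module_target])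

lemma succ_left_single: "succ_left (single a 1) X = (case a of None \<Rightarrow> X | Some t \<Rightarrow> succD (eval t) X)"
  by (simp add: succ_left_def module.lin_extend_single[OF module_target] module.scale_one[OF module_target])

lemma prec_right_single: "prec_right Z (single b 1) = (case b of None \<Rightarrow> Z | Some t \<Rightarrow> precD Z (eval t))"
  by (simp add: prec_right_def module.lin_extend_single[OF module_target] module.scale_one[OF module_target])

lemma lift_graft: "lift (graft P (x, n) Q) = prec_right (succ_left P (gen x n)) Q"
proof (rule bilin_map_eq_on_basis[where s = sD and F = "\<lambda>P Q. lift (graft P (x, n) Q)"])
  show "lin_map pm_scale sD (\<lambda>P. lift (graft P (x, n) Q))" for Q
    by (rule lin_map_comp[OF lin_map_graft1 lin_map_lift])
  show "lin_map pm_scale sD (\<lambda>P. prec_right (succ_left P (gen x n)) Q)" for Q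
    by (rule lin_map_comp[OF lin_map_succ_left lin_map_prec_right1])
  show "lin_map pm_scale sD (\<lambda>Q. lift (graft (single a 1) (x, n) Q))" for a
    by (rule lin_map_comp[OF lin_map_graft2 lin_map_lift])
  show "lin_map pm_scale sD (\<lambda>Q. prec_right (succ_left (single a 1) (gen x n)) Q)" for a
    by (rule lin_map_prec_right2)
  show "lift (graft (single a 1) (x, n) (single b 1)) = prec_right (succ_left (single a 1) (gen x n)) (single b 1)"
    for a b by (cases a; cases b) (simp_all add: graft_single lift_single succ_left_single prec_right_single)
qed

lemma prec_right_incl: "prec_right Z (incl M) = precD Z (lift M)"
  by (rule lin_map_eq_on_basis[where s = sD and F = "\<lambda>M. prec_right Z (incl M)"])
     (auto intro: lin_map_comp[OF lin_map_incl lin_map_prec_right2] lin_map_comp[OF lin_map_lift lin_map_precD2]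
       simp: prec_right_single lift_single)

lemma succ_left_incl: "succ_left (incl M) X = succD (lift M) X"
  by (rule lin_map_eq_on_basis[where s = sD and F = "\<lambda>M. succ_left (incl M) X"])
     (auto intro: lin_map_comp[OF lin_map_incl lin_map_succ_left] lin_map_comp[OF lin_map_lift lin_map_succD1]
       simp: succ_left_single lift_single)

lemma prec_right_aug_mult:
  assumes "\<And>b'. b = Some b' \<Longrightarrow> lift (DD_prec (single b' 1) S) = precD (lift (single b' 1)) (lift S)
      \<and> lift (DD_succ (single b' 1) S) = succD (lift (single b' 1)) (lift S)"
  shows "prec_right Z (aug_mult (single b 1) (incl S)) = precD (prec_right Z (single b 1)) (lift S)"
proof (cases b)
  case None
  then show ?thesis by (simp add: aug_mult_leaf_left prec_right_incl prec_right_single)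
next
  case (Some b')
  have "prec_right Z (aug_mult (single b 1) (incl S)) = precD Z (lift (DD_mult (single b' 1) S))"
    by (simp only: Some incl_single[symmetric] incl_DD_mult[symmetric] prec_right_incl)
  also have "\<dots> = precD Z (precD (lift (single b' 1)) (lift S) + succD (lift (single b' 1)) (lift S))"
    using assms[OF Some] by (simp add: lin_mapD_add[OF lin_map_lift])
  also have "\<dots> = precD (prec_right Z (single b 1)) (lift S)"
    by (simp add: precD_precD Some prec_right_single lift_single)
  finally show ?thesis .
qed

lemma succ_left_aug_mult:
  assumes "\<And>c'. c = Some c' \<Longrightarrow> lift (DD_prec T (single c' 1)) = precD (lift T) (lift (single c' 1))
      \<and> lift (DD_succ T (single c' 1)) = succD (lift T) (lift (single c' 1))"
  shows "succ_left (aug_mult (incl T) (single c 1)) Y = succD (lift T) (succ_left (single c 1) Y)"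
proof (cases c)
  case None
  then show ?thesis by (simp add: aug_mult_leaf_right succ_left_incl succ_left_single)
next
  case (Some c')
  have "succ_left (aug_mult (incl T) (single c 1)) Y = succD (lift (DD_mult T (single c' 1))) Y"
    by (simp only: Some incl_single[symmetric] incl_DD_mult[symmetric] succ_left_incl)
  also have "\<dots> = succD (precD (lift T) (lift (single c' 1)) + succD (lift T) (lift (single c' 1))) Y"
    using assms[OF Some] by (simp add: lin_mapD_add[OF lin_map_lift])
  also have "\<dots> = succD (lift T) (succ_left (single c 1) Y)"
    by (simp add: succD_sum Some succ_left_single lift_single)
  finally show ?thesis .
qed

lemma prec_right_succD: "prec_right (succD W V) (single d 1) = succD W (prec_right V (single d 1))"
  by (cases d) (simp_all add: prec_right_single precD_succD)

lemma lift_hom_basis: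
  fixes t s :: "('x \<times> nat) dtree"
  shows "lift (DD_prec (single t 1) (single s 1)) = precD (lift (single t 1)) (lift (single s (1::'k)))
    \<and> lift (DD_succ (single t 1) (single s 1)) = succD (lift (single t 1)) (lift (single s (1::'k)))"
proof (induction "size t + size s" arbitrary: t s rule: less_induct)
  case less
  obtain a x n b where t: "t = Vert a (x, n) b" by (metis dtree.exhaust prod.exhaust)
  obtain c y m d where s: "s = Vert c (y, m) d" by (metis dtree.exhaust prod.exhaust)
  have T: "single t (1::'k) = graft (single a 1) (x, n) (single b 1)" by (simp add: t graft_single)
  have S: "single s (1::'k) = graft (single c 1) (y, m) (single d 1)" by (simp add: s graft_single)
  have "lift (DD_prec (single t 1) (single s 1))
      = prec_right (succ_left (single a 1) (gen x n)) (aug_mult (single b 1) (incl (single s (1::'k))))"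
    by (simp only: T DD_prec_graft lift_graft)
  also have "\<dots> = precD (prec_right (succ_left (single a 1) (gen x n)) (single b 1)) (lift (single s 1))"
  proof (rule prec_right_aug_mult)
    fix b' assume "b = Some b'"
    then have "size b' + size s < size t + size s" using t by simp
    from less[OF this] show "lift (DD_prec (single b' 1) (single s 1)) = precD (lift (single b' 1)) (lift (single s 1))
      \<and> lift (DD_succ (single b' 1) (single s 1)) = succD (lift (single b' 1)) (lift (single s (1::'k)))" .
  qed
  also have "\<dots> = precD (lift (single t 1)) (lift (single s 1))" by (simp only: T lift_graft)
  finally have prec: "lift (DD_prec (single t 1) (single s 1)) = precD (lift (single t 1)) (lift (single s (1::'k)))" .
  have "lift (DD_succ (single t 1) (single s 1))
      = prec_right (succ_left (aug_mult (incl (single t (1::'k))) (single c 1)) (gen y m)) (single d 1)"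
    by (simp only: S DD_succ_graft lift_graft)
  also have "\<dots> = prec_right (succD (lift (single t 1)) (succ_left (single c 1) (gen y m))) (single d 1)"
  proof (subst succ_left_aug_mult)
    fix c' assume "c = Some c'"
    then have "size t + size c' < size t + size s" using s by simp
    from less[OF this] show "lift (DD_prec (single t 1) (single c' 1)) = precD (lift (single t 1)) (lift (single c' 1))
      \<and> lift (DD_succ (single t 1) (single c' 1)) = succD (lift (single t 1)) (lift (single c' (1::'k)))" .
  qed (rule refl)
  also have "\<dots> = succD (lift (single t 1)) (lift (single s 1))"
    by (simp only: prec_right_succD S lift_graft)
  finally show ?case using prec by blast
qed

lemma dD_prec_right:
  assumes "\<And>b'. b = Some b' \<Longrightarrow> dD (lift (single b' 1)) = lift (dX lam (single b' 1))"
  shows "dD (prec_right Z (single b 1)) = prec_right (dD Z) (single b 1) + prec_right Z (dAug lam (single b 1))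
     + sD lam (prec_right (dD Z) (dAug lam (single b 1)))"
proof (cases b)
  case None
  then show ?thesis
    by (simp add: prec_right_single lin_mapD_zero[OF lin_map_prec_right2] module.scale_zero_right[OF module_target])
next
  case (Some b')
  then show ?thesis
    using assms[OF Some] by (simp add: prec_right_single dD_precD dAug_Some prec_right_incl lift_single)
qed

lemma dD_succ_left:
  assumes "\<And>a'. a = Some a' \<Longrightarrow> dD (lift (single a' 1)) = lift (dX lam (single a' 1))"
  shows "dD (succ_left (single a 1) X) = succ_left (dAug lam (single a 1)) X + succ_left (single a 1) (dD X)
     + sD lam (succ_left (dAug lam (single a 1)) (dD X))"
proof (cases a)
  case None
  then show ?thesis
    by (simp add: succ_left_single lin_mapD_zero[OF lin_map_succ_left] module.scale_zero_right[OF module_target])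
next
  case (Some a')
  then show ?thesis
    using assms[OF Some] by (simp add: succ_left_single dD_succD dAug_Some succ_left_incl lift_single)
qed

lemma dD_lift_basis: "dD (lift (single t (1::'k))) = lift (dX lam (single t 1))"
proof (induction t)
  case (Vert a xn b)
  obtain x n where xn: "xn = (x, n)" by (cases xn)
  have T: "single (Vert a xn b) (1::'k) = graft (single a 1) (x, n) (single b 1)"
    by (simp add: xn graft_single)
  have right: "dD (prec_right Z (single b 1)) = prec_right (dD Z) (single b 1) + prec_right Z (dAug lam (single b 1))
     + sD lam (prec_right (dD Z) (dAug lam (single b (1::'k))))" for Z
    by (rule dD_prec_right) (use Vert(2) in auto)
  have left: "dD (succ_left (single a 1) X) = succ_left (dAug lam (single a 1)) X + succ_left (single a 1) (dD X)
     + sD lam (succ_left (dAug lam (single a (1::'k))) (dD X))" for X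
    by (rule dD_succ_left) (use Vert(1) in auto)
  show ?case
    unfolding T dX_graft lift_graft right left
    by (simp add: lin_mapD_add[OF lin_map_lift] lin_mapD_scale[OF lin_map_lift] lift_graft
        lin_mapD_add[OF lin_map_prec_right1] lin_mapD_scale[OF lin_map_prec_right1]
        module.scale_right_distrib[OF module_target] module.scale_scale[OF module_target] add_ac mult_ac)
qed

lemma dd_extension_lift: "dd_extension lift"
  unfolding dd_extension_def
proof (intro conjI allI)
  show "module_hom pm_scale sD lift"
    by (rule lin_map_module_hom[OF module_pm_scale module_target lin_map_lift])
  show "lift (DD_prec a b) = precD (lift a) (lift b)" for a b
    by (rule bilin_map_eq_on_basis[where s = sD and F = "\<lambda>a b. lift (DD_prec a b)"])
       (auto intro: lin_map_comp[OF lin_map_DD_prec1 lin_map_lift] lin_map_comp[OF lin_map_DD_prec2 lin_map_lift]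
         lin_map_comp[OF lin_map_lift lin_map_precD1] lin_map_comp[OF lin_map_lift lin_map_precD2]
         simp del: DD_prec_single DD_succ_single simp: lift_hom_basis)
  show "lift (DD_succ a b) = succD (lift a) (lift b)" for a b
    by (rule bilin_map_eq_on_basis[where s = sD and F = "\<lambda>a b. lift (DD_succ a b)"])
       (auto intro: lin_map_comp[OF lin_map_DD_succ1 lin_map_lift] lin_map_comp[OF lin_map_DD_succ2 lin_map_lift]
         lin_map_comp[OF lin_map_lift lin_map_succD1] lin_map_comp[OF lin_map_lift lin_map_succD2]
         simp del: DD_prec_single DD_succ_single simp: lift_hom_basis)
  show "dD (lift a) = lift (dX lam a)" for a
    by (rule lin_map_eq_on_basis[where s = sD and F = "\<lambda>a. dD (lift a)"])
       (auto intro: lin_map_comp[OF lin_map_lift lin_map_dD] lin_map_comp[OF lin_map_dX lin_map_lift]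
         simp: dD_lift_basis)
  show "lift (jX x) = f x" for x
    by (simp add: jX_def lift_single)
qed

lemma dd_extension_corolla:
  assumes "dd_extension h"
  shows "h (single (Vert None (x, n) None) 1) = gen x n"
proof (induction n)
  case 0
  then show ?case using assms by (simp add: dd_extension_def jX_def)
next
  case (Suc n)
  have "h (single (Vert None (x, Suc n) None) 1) = h (dX lam (single (Vert None (x, n) None) 1))"
    by (simp only: dX_corolla)
  also have "\<dots> = dD (h (single (Vert None (x, n) None) 1))"
    using assms by (simp add: dd_extension_def)
  finally show ?case using Suc by simp
qed

lemma dd_extension_single:
  assumes "dd_extension h"
  shows "h (single t 1) = eval t"
proof (induction t)
  case (Vert a xn b)
  obtain x n where xn: "xn = (x, n)" by (cases xn)
  have h_prec: "h (DD_prec P Q) = precD (h P) (h Q)" and h_succ: "h (DD_succ P Q) = succD (h P) (h Q)" for P Q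
    using assms by (simp_all add: dd_extension_def)
  have left: "h (graft (single a 1) (x, n) (single None 1))
      = (case map_option eval a of None \<Rightarrow> gen x n | Some A \<Rightarrow> succD A (gen x n))"
  proof (cases a)
    case None
    then show ?thesis using dd_extension_corolla[OF assms] by (simp add: graft_single)
  next
    case (Some a')
    have "graft (single a 1) (x, n) (single None 1)
        = DD_succ (single a' 1) (graft (single None 1) (x, n) (single None (1::'k)))"
      by (simp only: Some DD_succ_graft aug_mult_leaf_right incl_single)
    then have "h (graft (single a 1) (x, n) (single None 1))
        = succD (h (single a' 1)) (h (graft (single None 1) (x, n) (single None 1)))"
      by (simp only: h_succ)
    then show ?thesis
      using Vert(1) dd_extension_corolla[OF assms] by (simp add: Some graft_single)
  qed
  show ?case
  proof (cases b)
    case None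
    then show ?thesis using left by (simp add: xn graft_single Let_def)
  next
    case (Some b')
    have "graft (single a 1) (x, n) (single b 1)
        = DD_prec (graft (single a 1) (x, n) (single None 1)) (single b' (1::'k))"
      by (simp only: Some DD_prec_graft aug_mult_leaf_left incl_single)
    then have "h (graft (single a 1) (x, n) (single b 1))
        = precD (h (graft (single a 1) (x, n) (single None 1))) (h (single b' 1))"
      by (simp only: h_prec)
    then show ?thesis
      using Vert(2) left by (simp add: Some xn Let_def graft_single)
  qed
qed

lemma dd_extension_unique:
  assumes "dd_extension h"
  shows "h = lift"
proof
  have "lin_map pm_scale sD h"
    using assms by (simp add: dd_extension_def module_hom_lin_map)
  then show "h p = lift p" for p
    by (rule lin_map_eq_on_basis[OF _ lin_map_lift]) (simp add: dd_extension_single[OF assms] lift_single)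
qed

lemma ex1_dd_extension: "\<exists>!h. dd_extension h"
  using dd_extension_lift dd_extension_unique by blast

end

theorem theorem5p6:
  fixes lam :: "'k::comm_ring_1"
  shows "diff_dendriform_algebra (pm_scale :: 'k \<Rightarrow> ('x, 'k) DD \<Rightarrow> ('x, 'k) DD)
            DD_prec DD_succ (dX lam) lam
    \<and> (\<forall>(sD :: 'k \<Rightarrow> 'd::ab_group_add \<Rightarrow> 'd) precD succD dD (f :: 'x \<Rightarrow> 'd).
          diff_dendriform_algebra sD precD succD dD lam \<longrightarrow>
          (\<exists>!g :: ('x, 'k) DD \<Rightarrow> 'd.
              module_hom pm_scale sD g
            \<and> (\<forall>a b. g (DD_prec a b) = precD (g a) (g b))
            \<and> (\<forall>a b. g (DD_succ a b) = succD (g a) (g b))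
            \<and> (\<forall>a. dD (g a) = g (dX lam a))
            \<and> (\<forall>x. g (jX x) = f x)))"
proof (intro conjI allI impI)
  show "diff_dendriform_algebra pm_scale DD_prec DD_succ (dX lam) lam"
    by (rule diff_dendriform_algebra_DD)
  fix sD :: "'k \<Rightarrow> 'd \<Rightarrow> 'd" and precD succD dD and f :: "'x \<Rightarrow> 'd"
  assume "diff_dendriform_algebra sD precD succD dD lam"
  then interpret diff_dendriform_target sD precD succD dD lam f
    by unfold_locales
  show "\<exists>!g. module_hom pm_scale sD g
      \<and> (\<forall>a b. g (DD_prec a b) = precD (g a) (g b))
      \<and> (\<forall>a b. g (DD_succ a b) = succD (g a) (g b))
      \<and> (\<forall>a. dD (g a) = g (dX lam a))
      \<and> (\<forall>x. g (jX x) = f x)"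
    using ex1_dd_extension unfolding dd_extension_def .
qed
end
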